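(* Let $(S,X,T)$ and $g^r_\epsilon(P_{S,X,T})$ be as defined below. If $S=f(T)$ for some deterministic function $f$, then for all $\epsilon\geq 0$ and all $r$ with $H(X\mid S)+\epsilon\leq r< H(X)$, $$g^{r}_{\epsilon}(P_{S,X,T})=H(T\mid S)+\epsilon .$$
   Context: $S$ takes values in a finite alphabet, $X$ and $T$ in finite or countably infinite alphabets, all with finite entropies. For $r,\epsilon\geq 0$, $$g^{r}_{\epsilon}(P_{S,X,T})=\sup_{P_{Y\mid S,X,T}:\ I(Y;S)\leq \epsilon,\ I(X;Y)\leq r} I(Y;T),$$ the supremum being over conditional distributions of a discrete random variable $Y$ given $(S,X,T)$. *)

theory Defs
  imports "HOL-Probability.Probability"
begin

text \<open>Discrete information measures (in bits) for probability mass functions.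
  Sums of nonnegative terms are taken in ennreal, so they are always defined
  (possibly infinite).\<close>

definition entropy_pmf :: "'a pmf \<Rightarrow> ennreal" where
  "entropy_pmf p = (\<Sum>\<^sub>\<infinity>a. ennreal (- pmf p a * log 2 (pmf p a)))"

definition cond_entropy_pmf :: "('a \<times> 'b) pmf \<Rightarrow> ennreal" where
  "cond_entropy_pmf Q = (\<Sum>\<^sub>\<infinity>z. ennreal (- pmf Q z * log 2 (pmf Q z / pmf (map_pmf snd Q) (snd z))))"

text \<open>Mutual information I(A;B) = sum over (a,b) of p(a,b) log (p(a,b)/(p(a)p(b))),
  the (possibly infinite) series being evaluated as positive part minus negative part
  (the negative part is always finite).\<close>
definition mi_term :: "('a \<times> 'b) pmf \<Rightarrow> 'a \<times> 'b \<Rightarrow> real" where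
  "mi_term Q z = pmf Q z * log 2 (pmf Q z / (pmf (map_pmf fst Q) (fst z) * pmf (map_pmf snd Q) (snd z)))"

definition mutual_info_pmf :: "('a \<times> 'b) pmf \<Rightarrow> ennreal" where
  "mutual_info_pmf Q = (\<Sum>\<^sub>\<infinity>z. ennreal (mi_term Q z)) - (\<Sum>\<^sub>\<infinity>z. ennreal (- mi_term Q z))"

text \<open>Joint distribution of ((S,X,T),Y) obtained from P_{S,X,T} and a channel P_{Y|S,X,T}.
  Y takes values in nat (any discrete alphabet embeds into nat).\<close>
definition joint_SXTY :: "('s \<times> 'x \<times> 't) pmf \<Rightarrow> ('s \<times> 'x \<times> 't \<Rightarrow> nat pmf)
    \<Rightarrow> (('s \<times> 'x \<times> 't) \<times> nat) pmf" where
  "joint_SXTY P K = bind_pmf P (\<lambda>w. map_pmf (\<lambda>y. (w, y)) (K w))"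

definition g_fun :: "real \<Rightarrow> real \<Rightarrow> ('s \<times> 'x \<times> 't) pmf \<Rightarrow> ennreal" where
  "g_fun r \<epsilon> P =
     (SUP K \<in> {K. mutual_info_pmf (map_pmf (\<lambda>((s,x,t),y). (y,s)) (joint_SXTY P K)) \<le> ennreal \<epsilon>
               \<and> mutual_info_pmf (map_pmf (\<lambda>((s,x,t),y). (x,y)) (joint_SXTY P K)) \<le> ennreal r}.
        mutual_info_pmf (map_pmf (\<lambda>((s,x,t),y). (y,t)) (joint_SXTY P K)))"

end

theory Submission
  imports Defs
begin

(*
  Upper bound: whatever the channel, I(Y;T) <= I(Y;S) + H(T|S) <= epsilon + H(T|S); this only
  needs S to take finitely many values.

  Lower bound: let W be a random function from the values of S to those of T with W(S) = T and
  with the other values W(s') drawn independently from P(T | S = s'), so that W is independent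
  of S. Let Z reveal S with probability lam and be None otherwise, and output Y = (W, Z). Since
  T = W(S), I(Y;T) = I(Y;S) + H(T|S), while I(Y;S) = lam H(S). Taking lam = epsilon / H(S) gives
  I(Y;S) = epsilon and I(Y;T) = H(T|S) + epsilon, and the inequality of the upper bound, with X in
  place of T, gives I(X;Y) <= epsilon + H(X|S) <= r. Finally r < H(X) <= H(S) + H(X|S) ensures
  lam < 1.
*)

lemma infsum_ennreal_eq_nn_integral:
  fixes f :: "'a::countable \<Rightarrow> ennreal"
  shows "(\<Sum>\<^sub>\<infinity>x. f x) = (\<integral>\<^sup>+x. f x \<partial>count_space UNIV)"
proof -
  define F where "F n = (to_nat -` {..<n} :: 'a set)" for n
  have finite_F: "finite (F n)" for n
    unfolding F_def by (rule finite_vimageI) (simp_all add: inj_to_nat)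
  have sum_F_SUP: "(SUP n. sum f (F n)) = (SUP G\<in>{G. finite G \<and> G \<subseteq> UNIV}. sum f G)"
  proof (rule antisym)
    show "(SUP n. sum f (F n)) \<le> (SUP G\<in>{G. finite G \<and> G \<subseteq> UNIV}. sum f G)"
      by (intro SUP_least SUP_upper2[where i="F n" for n]) (auto simp: finite_F)
    show "(SUP G\<in>{G. finite G \<and> G \<subseteq> UNIV}. sum f G) \<le> (SUP n. sum f (F n))"
    proof (intro SUP_least, clarsimp)
      fix G :: "'a set" assume "finite G"
      then have "G \<subseteq> F (Suc (Max (to_nat ` G)))"
        by (auto simp: F_def less_Suc_eq_le)
      then have "sum f G \<le> sum f (F (Suc (Max (to_nat ` G))))"
        by (intro sum_mono2 finite_F) auto
      then show "sum f G \<le> (SUP n. sum f (F n))"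
        by (rule order_trans) (rule SUP_upper, simp)
    qed
  qed
  have "(\<integral>\<^sup>+x. f x \<partial>count_space UNIV)
      = (\<integral>\<^sup>+x. (SUP n. f x * indicator (F n) x) \<partial>count_space UNIV)"
  proof (intro nn_integral_cong antisym)
    fix x
    show "(SUP n. f x * indicator (F n) x) \<le> f x"
      by (auto intro!: SUP_least simp: indicator_def)
    show "f x \<le> (SUP n. f x * indicator (F n) x)"
      by (rule SUP_upper2[of "Suc (to_nat x)"]) (auto simp: F_def)
  qed
  also have "\<dots> = (SUP n. \<integral>\<^sup>+x. f x * indicator (F n) x \<partial>count_space UNIV)"
    by (rule nn_integral_monotone_convergence_SUP)
       (auto simp: incseq_def le_fun_def F_def indicator_def)
  also have "\<dots> = (SUP n. sum f (F n))"
    by (simp add: nn_integral_count_space_indicator[symmetric] nn_integral_count_space_finite finite_F)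
  also have "\<dots> = (\<Sum>\<^sub>\<infinity>x. f x)"
    unfolding sum_F_SUP by (rule nonneg_infsum_complete[symmetric]) simp
  finally show ?thesis ..
qed

lemma ennreal_summable_on [simp]: "(f :: 'a \<Rightarrow> ennreal) summable_on A"
  by (rule nonneg_summable_on_complete) simp

lemma infsum_pmf_mult_eq_nn_integral:
  fixes Q :: "'a::countable pmf"
  shows "(\<Sum>\<^sub>\<infinity>z. ennreal (pmf Q z) * h z) = (\<integral>\<^sup>+z. h z \<partial>measure_pmf Q)"
  by (simp add: infsum_ennreal_eq_nn_integral nn_integral_measure_pmf)

lemma infsum_prod_finite_fst:
  fixes F :: "'s::finite \<times> 'b::countable \<Rightarrow> ennreal"
  shows "(\<Sum>\<^sub>\<infinity>z. F z) = (\<Sum>\<^sub>\<infinity>b. \<Sum>s\<in>UNIV. F (s, b))"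
proof -
  have "(\<Union>s. range (Pair s)) = (UNIV :: ('s \<times> 'b) set)"
    by auto
  then have "(\<Sum>\<^sub>\<infinity>z. F z) = (\<Sum>s\<in>UNIV. \<Sum>\<^sub>\<infinity>z\<in>range (Pair s). F z)"
    by (subst sum_infsum) auto
  also have "\<dots> = (\<Sum>s\<in>UNIV. \<Sum>\<^sub>\<infinity>b. F (s, b))"
    by (intro sum.cong refl) (simp add: infsum_reindex inj_on_def comp_def)
  also have "\<dots> = (\<Sum>\<^sub>\<infinity>b. \<Sum>s\<in>UNIV. F (s, b))"
    unfolding infsum_ennreal_eq_nn_integral by (rule nn_integral_sum[symmetric]) simp
  finally show ?thesis .
qed

lemma infsum_sum_pmf_eq_infsum_map_pmf:
  fixes Q :: "('s::finite \<times> 'b::countable) pmf" and \<phi> :: "'s \<times> 'b \<Rightarrow> 'c::countable"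
  shows "(\<Sum>\<^sub>\<infinity>b. \<Sum>s\<in>UNIV. ennreal (pmf Q (s, b) * G (\<phi> (s, b))))
       = (\<Sum>\<^sub>\<infinity>u. ennreal (pmf (map_pmf \<phi> Q) u * G u))"
proof -
  have "(\<Sum>\<^sub>\<infinity>b. \<Sum>s\<in>UNIV. ennreal (pmf Q (s, b) * G (\<phi> (s, b))))
      = (\<Sum>\<^sub>\<infinity>z. ennreal (pmf Q z) * ennreal (G (\<phi> z)))"
    by (simp add: infsum_prod_finite_fst ennreal_mult')
  also have "\<dots> = (\<integral>\<^sup>+u. ennreal (G u) \<partial>measure_pmf (map_pmf \<phi> Q))"
    by (simp add: infsum_pmf_mult_eq_nn_integral)
  also have "\<dots> = (\<Sum>\<^sub>\<infinity>u. ennreal (pmf (map_pmf \<phi> Q) u * G u))"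
    by (simp add: infsum_pmf_mult_eq_nn_integral[symmetric] ennreal_mult')
  finally show ?thesis .
qed

lemma pmf_le_pmf_map: "pmf Q z \<le> pmf (map_pmf g Q) (g z)"
proof -
  have "pmf Q z = measure Q {z}" by (simp add: measure_pmf_single)
  also have "\<dots> \<le> measure Q (g -` {g z})" by (intro measure_pmf.finite_measure_mono) auto
  finally show ?thesis by (simp add: pmf_map)
qed

lemma pmf_map_fst_finite:
  fixes R :: "('a \<times> 's::finite) pmf"
  shows "pmf (map_pmf fst R) a = (\<Sum>s\<in>UNIV. pmf R (a, s))"
proof -
  have "fst -` {a} = range (Pair a :: 's \<Rightarrow> _)" by auto
  then show ?thesis
    by (simp add: pmf_map measure_measure_pmf_finite sum.reindex inj_on_def)
qed

lemma pmf_map_snd_finite: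
  fixes R :: "('s::finite \<times> 'b) pmf"
  shows "pmf (map_pmf snd R) b = (\<Sum>s\<in>UNIV. pmf R (s, b))"
proof -
  have "snd -` {b} = range (\<lambda>s :: 's. (s, b))" by auto
  then show ?thesis
    by (simp add: pmf_map measure_measure_pmf_finite sum.reindex inj_on_def)
qed

lemma measure_pmf_eq_sum_pmf:
  assumes "finite F" "F \<subseteq> B" "\<And>x. x \<in> B \<Longrightarrow> x \<notin> F \<Longrightarrow> pmf M x = 0"
  shows "measure M B = sum (pmf M) F"
proof -
  have "B \<inter> set_pmf M = F \<inter> set_pmf M" using assms(2,3) by (auto simp: set_pmf_eq)
  then have "measure M B = measure M F" by (metis measure_Int_set_pmf)
  then show ?thesis using assms(1) by (simp add: measure_measure_pmf_finite)
qed

lemma pmf_bind_pmf_tagged: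
  assumes "\<And>a. set_pmf (F a) \<subseteq> {x. tag x = a}"
  shows "pmf (bind_pmf A F) x = pmf A (tag x) * pmf (F (tag x)) x"
proof -
  have "pmf (bind_pmf A F) x = (\<integral>a. pmf (F a) x \<partial>A)" by (rule pmf_bind)
  also have "\<dots> = (\<Sum>a\<in>{tag x}. pmf (F a) x * pmf A a)"
    by (rule integral_measure_pmf_real) (use assms in \<open>auto simp: set_pmf_eq\<close>)
  finally show ?thesis by simp
qed

lemma neg_log2_nonneg: "0 \<le> x \<Longrightarrow> x \<le> 1 \<Longrightarrow> 0 \<le> - log 2 x"
  by (cases "x = 0") (auto simp: log_def divide_nonpos_pos)

lemma mult_log2_div_le: "0 < a \<Longrightarrow> 0 < b \<Longrightarrow> a * log 2 (b / a) \<le> (b - a) / ln 2"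
  using ln_le_minus_one[of "b / a"]
  by (simp add: log_def field_simps mult_left_mono)

lemma log_sum_inequality:
  fixes a b :: "'i \<Rightarrow> real"
  assumes "finite I" and a: "\<And>i. 0 \<le> a i" and b: "\<And>i. 0 \<le> b i"
    and ab: "\<And>i. 0 < a i \<Longrightarrow> 0 < b i"
  shows "sum a I * log 2 (sum a I / sum b I) \<le> (\<Sum>i\<in>I. a i * log 2 (a i / b i))"
proof (cases "sum a I = 0")
  case True
  then have "\<forall>i\<in>I. a i = 0" using \<open>finite I\<close> a by (simp add: sum_nonneg_eq_0_iff)
  then show ?thesis using True by simp
next
  case False
  define A B where "A = sum a I" and "B = sum b I"
  obtain j where "j \<in> I" "0 < a j"
    using False a by (metis order_le_neq_trans sum.neutral)
  then have "0 < b j" using ab by blast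
  then have "0 < B" unfolding B_def
    using \<open>finite I\<close> \<open>j \<in> I\<close> b by (metis member_le_sum order_less_le_trans)
  have "0 < A" unfolding A_def using \<open>finite I\<close> \<open>j \<in> I\<close> \<open>0 < a j\<close> a
    by (metis member_le_sum order_less_le_trans)
  have "a i * log 2 (A / B) - a i * log 2 (a i / b i) \<le> (A * b i / B - a i) / ln 2" for i
  proof (cases "a i = 0")
    case True then show ?thesis using \<open>0 < A\<close> \<open>0 < B\<close> b[of i] by simp
  next
    case False
    then have "0 < a i" "0 < b i" using a[of i] ab[of i] by auto
    then have "a i * log 2 (A / B) - a i * log 2 (a i / b i) = a i * log 2 ((A * b i / B) / a i)"
      using \<open>0 < A\<close> \<open>0 < B\<close> by (simp add: log_divide log_mult algebra_simps)
    also have "\<dots> \<le> (A * b i / B - a i) / ln 2"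
      using \<open>0 < a i\<close> \<open>0 < b i\<close> \<open>0 < A\<close> \<open>0 < B\<close> by (intro mult_log2_div_le) auto
    finally show ?thesis .
  qed
  then have "(\<Sum>i\<in>I. a i * log 2 (A / B) - a i * log 2 (a i / b i)) \<le> (\<Sum>i\<in>I. (A * b i / B - a i) / ln 2)"
    by (rule sum_mono)
  also have "\<dots> = (A / B * B - A) / ln 2"
    by (simp add: A_def B_def sum_subtractf sum_divide_distrib[symmetric] sum_distrib_left)
  also have "\<dots> = 0" using \<open>0 < B\<close> by simp
  finally show ?thesis
    by (simp add: sum_subtractf sum_distrib_right[symmetric] flip: A_def B_def)
qed

lemma ennreal_signed_sum_le:
  fixes b :: "'i \<Rightarrow> real"
  assumes "a \<le> (\<Sum>i\<in>I. b i) + c" "0 \<le> c"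
  shows "ennreal a + (\<Sum>i\<in>I. ennreal (- b i)) \<le> (\<Sum>i\<in>I. ennreal (b i)) + ennreal c + ennreal (- a)"
proof -
  have pos_part: "ennreal x = ennreal (max x 0)" for x :: real
    by (simp add: max_def ennreal_neg)
  have sum_pos_part: "(\<Sum>i\<in>I. ennreal (g i)) = ennreal (\<Sum>i\<in>I. max (g i) 0)" for g :: "'i \<Rightarrow> real"
  proof -
    have "(\<Sum>i\<in>I. ennreal (g i)) = (\<Sum>i\<in>I. ennreal (max (g i) 0))"
      by (rule sum.cong[OF refl pos_part])
    also have "\<dots> = ennreal (\<Sum>i\<in>I. max (g i) 0)"
      by (rule sum_ennreal) simp
    finally show ?thesis .
  qed
  define Bp Bn where "Bp = (\<Sum>i\<in>I. max (b i) 0)" and "Bn = (\<Sum>i\<in>I. max (- b i) 0)"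
  have "0 \<le> Bp" "0 \<le> Bn" unfolding Bp_def Bn_def by (simp_all add: sum_nonneg)
  have "(\<Sum>i\<in>I. b i) = Bp - Bn"
    unfolding Bp_def Bn_def by (simp add: sum_subtractf[symmetric]) (intro sum.cong; auto simp: max_def)
  then have "max a 0 + Bn \<le> Bp + c + max (- a) 0"
    using assms(1) by (simp add: max_def)
  then have "ennreal (max a 0 + Bn) \<le> ennreal (Bp + c + max (- a) 0)"
    by (rule ennreal_leI)
  moreover have "ennreal (max a 0 + Bn) = ennreal a + ennreal Bn"
    using \<open>0 \<le> Bn\<close> by simp
  moreover have "ennreal (Bp + c + max (- a) 0) = ennreal Bp + ennreal c + ennreal (- a)"
    using \<open>0 \<le> Bp\<close> \<open>0 \<le> c\<close> by simp
  ultimately show ?thesis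
    unfolding sum_pos_part Bp_def[symmetric] Bn_def[symmetric] by simp
qed

lemma ennreal_diff_le_of_add_le:
  fixes a b c d e :: ennreal
  assumes "a + d \<le> c + e + b" "d \<noteq> \<top>" "b \<noteq> \<top>"
  shows "a - b \<le> (c - d) + e"
proof -
  have "c \<le> (c - d) + d"
  proof (cases "d \<le> c")
    case False
    then have "c \<le> d" by simp
    also have "d \<le> (c - d) + d" by (rule add_increasing) simp_all
    finally show ?thesis .
  qed (simp add: diff_add_cancel_ennreal)
  have "d + a = a + d" by (rule add.commute)
  also have "\<dots> \<le> c + e + b" by (rule assms(1))
  also have "\<dots> \<le> (c - d + d) + e + b" using \<open>c \<le> (c - d) + d\<close> by (intro add_right_mono)
  also have "\<dots> = d + (b + (c - d + e))" by (simp only: ac_simps)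
  finally have "a \<le> b + (c - d + e)"
    using \<open>d \<noteq> \<top>\<close> by (simp only: ennreal_add_left_cancel_le) simp
  then show ?thesis
    using \<open>b \<noteq> \<top>\<close> by (simp only: ennreal_minus_le_iff) simp
qed

lemma infsum_signed_le:
  fixes a c :: "'p \<Rightarrow> real" and b :: "'i \<Rightarrow> 'p \<Rightarrow> real"
  assumes le: "\<And>p. a p \<le> (\<Sum>i\<in>I. b i p) + c p" and c: "\<And>p. 0 \<le> c p"
    and "(\<Sum>\<^sub>\<infinity>p. ennreal (- a p)) \<noteq> \<top>" "(\<Sum>\<^sub>\<infinity>p. \<Sum>i\<in>I. ennreal (- b i p)) \<noteq> \<top>"
  shows "(\<Sum>\<^sub>\<infinity>p. ennreal (a p)) - (\<Sum>\<^sub>\<infinity>p. ennreal (- a p))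
     \<le> ((\<Sum>\<^sub>\<infinity>p. \<Sum>i\<in>I. ennreal (b i p)) - (\<Sum>\<^sub>\<infinity>p. \<Sum>i\<in>I. ennreal (- b i p)))
        + (\<Sum>\<^sub>\<infinity>p. ennreal (c p))"
proof (rule ennreal_diff_le_of_add_le)
  have "(\<Sum>\<^sub>\<infinity>p. ennreal (a p)) + (\<Sum>\<^sub>\<infinity>p. \<Sum>i\<in>I. ennreal (- b i p))
      = (\<Sum>\<^sub>\<infinity>p. ennreal (a p) + (\<Sum>i\<in>I. ennreal (- b i p)))"
    by (simp add: infsum_add)
  also have "\<dots> \<le> (\<Sum>\<^sub>\<infinity>p. (\<Sum>i\<in>I. ennreal (b i p)) + ennreal (c p) + ennreal (- a p))"
    by (intro infsum_mono ennreal_signed_sum_le le c) simp_all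
  also have "\<dots> = (\<Sum>\<^sub>\<infinity>p. \<Sum>i\<in>I. ennreal (b i p)) + (\<Sum>\<^sub>\<infinity>p. ennreal (c p))
      + (\<Sum>\<^sub>\<infinity>p. ennreal (- a p))"
    by (simp add: infsum_add)
  finally show "(\<Sum>\<^sub>\<infinity>p. ennreal (a p)) + (\<Sum>\<^sub>\<infinity>p. \<Sum>i\<in>I. ennreal (- b i p))
      \<le> (\<Sum>\<^sub>\<infinity>p. \<Sum>i\<in>I. ennreal (b i p)) + (\<Sum>\<^sub>\<infinity>p. ennreal (c p))
        + (\<Sum>\<^sub>\<infinity>p. ennreal (- a p))" .
qed fact+

section \<open>Information densities\<close>

definition pointwise_mi :: "('a \<times> 'b) pmf \<Rightarrow> 'a \<times> 'b \<Rightarrow> real" where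
  "pointwise_mi Q z = log 2 (pmf Q z / (pmf (map_pmf fst Q) (fst z) * pmf (map_pmf snd Q) (snd z)))"

definition cond_self_info :: "('a \<times> 'b) pmf \<Rightarrow> 'a \<times> 'b \<Rightarrow> real" where
  "cond_self_info Q z = - log 2 (pmf Q z / pmf (map_pmf snd Q) (snd z))"

lemma mi_term_eq_pmf_mult_pointwise_mi: "mi_term Q z = pmf Q z * pointwise_mi Q z"
  by (simp add: mi_term_def pointwise_mi_def)

lemma cond_self_info_nonneg: "0 \<le> cond_self_info Q z"
  unfolding cond_self_info_def
  by (rule neg_log2_nonneg) (use pmf_le_pmf_map[of Q z snd] in \<open>auto simp: divide_le_eq_1\<close>)

lemma entropy_pmf_eq_nn_integral:
  fixes p :: "'a::countable pmf"
  shows "entropy_pmf p = (\<integral>\<^sup>+a. ennreal (- log 2 (pmf p a)) \<partial>measure_pmf p)"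
  by (simp add: entropy_pmf_def infsum_pmf_mult_eq_nn_integral[symmetric] ennreal_mult'[symmetric])

lemma cond_entropy_pmf_eq_infsum:
  "cond_entropy_pmf Q = (\<Sum>\<^sub>\<infinity>z. ennreal (pmf Q z * cond_self_info Q z))"
  by (simp add: cond_entropy_pmf_def cond_self_info_def)

lemma cond_entropy_pmf_eq_nn_integral:
  fixes Q :: "('a::countable \<times> 'b::countable) pmf"
  shows "cond_entropy_pmf Q = (\<integral>\<^sup>+z. ennreal (cond_self_info Q z) \<partial>measure_pmf Q)"
  by (simp add: cond_entropy_pmf_eq_infsum ennreal_mult' infsum_pmf_mult_eq_nn_integral)

lemma mutual_info_pmf_eq_nn_integral:
  fixes Q :: "('a::countable \<times> 'b::countable) pmf"
  assumes "\<And>z. z \<in> set_pmf Q \<Longrightarrow> 0 \<le> pointwise_mi Q z"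
  shows "mutual_info_pmf Q = (\<integral>\<^sup>+z. ennreal (pointwise_mi Q z) \<partial>measure_pmf Q)"
proof -
  have "ennreal (- mi_term Q z) = 0" for z
    using assms[of z] by (cases "z \<in> set_pmf Q") (auto simp: mi_term_eq_pmf_mult_pointwise_mi set_pmf_iff ennreal_eq_0_iff)
  then show ?thesis
    by (simp add: mutual_info_pmf_def mi_term_eq_pmf_mult_pointwise_mi ennreal_mult'
        infsum_pmf_mult_eq_nn_integral)
qed

lemma neg_mi_term_le:
  "- mi_term Q (a, b) \<le> pmf (map_pmf fst Q) a * pmf (map_pmf snd Q) b / ln 2"
proof (cases "pmf Q (a, b) = 0")
  case True then show ?thesis by (simp add: mi_term_def)
next
  case False
  define p pa pb where "p = pmf Q (a, b)" and "pa = pmf (map_pmf fst Q) a"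
    and "pb = pmf (map_pmf snd Q) b"
  have "0 < p" using False by (simp add: p_def)
  moreover have "p \<le> pa" "p \<le> pb"
    unfolding p_def pa_def pb_def
    using pmf_le_pmf_map[of Q "(a, b)" fst] pmf_le_pmf_map[of Q "(a, b)" snd] by auto
  ultimately have "- mi_term Q (a, b) = p * log 2 (pa * pb / p)"
    by (simp add: mi_term_def flip: p_def pa_def pb_def) (simp add: log_divide algebra_simps)
  also have "\<dots> \<le> (pa * pb - p) / ln 2"
    using \<open>0 < p\<close> \<open>p \<le> pa\<close> \<open>p \<le> pb\<close> by (intro mult_log2_div_le) auto
  also have "\<dots> \<le> pa * pb / ln 2"
    using \<open>0 < p\<close> by (simp add: divide_right_mono)
  finally show ?thesis by (simp add: pa_def pb_def)
qed

lemma infsum_neg_mi_term_finite: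
  fixes Q :: "('a::countable \<times> 'b::countable) pmf"
  shows "(\<Sum>\<^sub>\<infinity>z. ennreal (- mi_term Q z)) \<noteq> \<top>"
proof -
  let ?M = "pair_pmf (map_pmf fst Q) (map_pmf snd Q)"
  have "(\<Sum>\<^sub>\<infinity>z. ennreal (- mi_term Q z)) \<le> (\<Sum>\<^sub>\<infinity>z. ennreal (pmf ?M z) * ennreal (1 / ln 2))"
  proof (rule infsum_mono)
    fix z :: "'a \<times> 'b"
    show "ennreal (- mi_term Q z) \<le> ennreal (pmf ?M z) * ennreal (1 / ln 2)"
      using neg_mi_term_le[of Q "fst z" "snd z"]
      by (cases z) (simp add: pmf_pair ennreal_mult'[symmetric] ennreal_leI)
  qed simp_all
  also have "\<dots> = ennreal (1 / ln 2)"
    by (simp add: infsum_pmf_mult_eq_nn_integral measure_pmf.emeasure_space_1)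
  finally show ?thesis by (auto simp: top_unique)
qed

lemma entropy_pmf_fst_le:
  fixes R :: "('a::countable \<times> 'b::countable) pmf"
  shows "entropy_pmf (map_pmf fst R) \<le> entropy_pmf (map_pmf snd R) + cond_entropy_pmf R"
proof -
  have "entropy_pmf (map_pmf fst R) = (\<integral>\<^sup>+z. ennreal (- log 2 (pmf (map_pmf fst R) (fst z))) \<partial>R)"
    by (simp add: entropy_pmf_eq_nn_integral)
  also have "\<dots> \<le> (\<integral>\<^sup>+z. ennreal (- log 2 (pmf (map_pmf snd R) (snd z)))
      + ennreal (cond_self_info R z) \<partial>R)"
  proof (rule nn_integral_mono_AE, rule AE_pmfI)
    fix z assume "z \<in> set_pmf R"
    define pz pa pb where "pz = pmf R z" and "pa = pmf (map_pmf fst R) (fst z)"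
      and "pb = pmf (map_pmf snd R) (snd z)"
    have "0 < pz" using \<open>z \<in> set_pmf R\<close> by (simp add: pz_def pmf_positive)
    moreover have "pz \<le> pa" "pz \<le> pb" "pb \<le> 1"
      unfolding pz_def pa_def pb_def using pmf_le_pmf_map[of R z] by (auto simp: pmf_le_1)
    ultimately have "- log 2 pa \<le> - log 2 pb + cond_self_info R z"
      by (simp add: cond_self_info_def log_divide flip: pz_def pb_def)
    moreover have "0 \<le> - log 2 pb"
      using \<open>0 < pz\<close> \<open>pz \<le> pb\<close> \<open>pb \<le> 1\<close> by (intro neg_log2_nonneg) auto
    ultimately show "ennreal (- log 2 pa) \<le> ennreal (- log 2 pb) + ennreal (cond_self_info R z)"
      by (simp add: cond_self_info_nonneg ennreal_leI flip: ennreal_plus)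
  qed
  also have "\<dots> = entropy_pmf (map_pmf snd R) + cond_entropy_pmf R"
    by (simp add: nn_integral_add entropy_pmf_eq_nn_integral cond_entropy_pmf_eq_nn_integral)
  finally show ?thesis .
qed

lemma less_entropy_snd_if_cond_entropy_add_less:
  fixes R :: "('a::countable \<times> 'b::countable) pmf"
  assumes "cond_entropy_pmf R + e < entropy_pmf (map_pmf fst R)"
  shows "e < entropy_pmf (map_pmf snd R)"
proof -
  note assms
  also have "entropy_pmf (map_pmf fst R) \<le> cond_entropy_pmf R + entropy_pmf (map_pmf snd R)"
    using entropy_pmf_fst_le[of R] by (simp only: add.commute)
  finally have "cond_entropy_pmf R + e < cond_entropy_pmf R + entropy_pmf (map_pmf snd R)" .
  moreover have "cond_entropy_pmf R \<noteq> \<top>"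
    using assms by (auto simp: top_unique)
  ultimately show ?thesis
    by (simp add: ennreal_add_left_cancel_less)
qed

lemma cond_entropy_pmf_graph:
  fixes p :: "'t::countable pmf" and f :: "'t \<Rightarrow> 's::countable"
  shows "cond_entropy_pmf (map_pmf (\<lambda>t. (t, f t)) p)
    = (\<integral>\<^sup>+t. ennreal (log 2 (pmf (map_pmf f p) (f t) / pmf p t)) \<partial>measure_pmf p)"
proof -
  let ?R = "map_pmf (\<lambda>t. (t, f t)) p"
  have "map_pmf snd ?R = map_pmf f p" by (simp add: map_pmf_comp)
  moreover have "pmf ?R (t, f t) = pmf p t" for t
    using pmf_map_inj'[of "\<lambda>t. (t, f t)" p t] by (simp add: inj_def)
  moreover have "pmf p t \<le> pmf (map_pmf f p) (f t)" for t
    by (rule pmf_le_pmf_map)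
  ultimately have "cond_self_info ?R (t, f t) = log 2 (pmf (map_pmf f p) (f t) / pmf p t)" for t
    by (cases "pmf p t = 0")
      (simp_all add: cond_self_info_def log_def ln_div diff_divide_distrib)
  then show ?thesis
    by (simp add: cond_entropy_pmf_eq_nn_integral)
qed

lemma mutual_info_pmf_reindex:
  assumes "inj h" and mi_term_h: "\<And>u. mi_term Q' (h u) = mi_term Q u"
    and outside: "\<And>u. u \<notin> range h \<Longrightarrow> pmf Q' u = 0"
  shows "mutual_info_pmf Q' = mutual_info_pmf Q"
proof -
  have "(\<Sum>\<^sub>\<infinity>u. g (mi_term Q' u)) = (\<Sum>\<^sub>\<infinity>u. g (mi_term Q u))"
    if "g 0 = 0" for g :: "real \<Rightarrow> ennreal"
  proof -
    have "(\<Sum>\<^sub>\<infinity>u. g (mi_term Q' u)) = (\<Sum>\<^sub>\<infinity>u\<in>range h. g (mi_term Q' u))"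
      by (rule infsum_cong_neutral) (auto simp: outside mi_term_def that)
    also have "\<dots> = (\<Sum>\<^sub>\<infinity>u. g (mi_term Q' (h u)))"
      using \<open>inj h\<close> by (simp add: infsum_reindex comp_def)
    finally show ?thesis by (simp add: mi_term_h)
  qed
  from this[of "\<lambda>x. ennreal x"] this[of "\<lambda>x. ennreal (- x)"] show ?thesis
    by (simp add: mutual_info_pmf_def)
qed

lemma mutual_info_pmf_swap: "mutual_info_pmf (map_pmf prod.swap Q) = mutual_info_pmf Q"
proof (rule mutual_info_pmf_reindex)
  show "mi_term (map_pmf prod.swap Q) (prod.swap u) = mi_term Q u" for u
    using pmf_map_inj'[of prod.swap Q u]
    by (cases u) (simp add: mi_term_def map_pmf_comp mult.commute)
qed auto

lemma mutual_info_pmf_map_fst_inj: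
  assumes "inj g"
  shows "mutual_info_pmf (map_pmf (map_prod g id) Q) = mutual_info_pmf Q"
proof (rule mutual_info_pmf_reindex)
  show "inj (map_prod g id)" using assms by (auto simp: inj_def)
  show "mi_term (map_pmf (map_prod g id) Q) (map_prod g id u) = mi_term Q u" for u
  proof -
    have "map_pmf fst (map_pmf (map_prod g id) Q) = map_pmf g (map_pmf fst Q)"
      "map_pmf snd (map_pmf (map_prod g id) Q) = map_pmf snd Q"
      by (simp_all add: map_pmf_comp)
    with \<open>inj g\<close> pmf_map_inj'[OF \<open>inj (map_prod g id)\<close>, of Q u] show ?thesis
      by (simp add: mi_term_def pmf_map_inj' del: map_prod_simp)
  qed
  show "pmf (map_pmf (map_prod g id) Q) u = 0" if "u \<notin> range (map_prod g id)" for u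
    using that by (intro pmf_map_outside) auto
qed

section \<open>Mutual information through a finite variable\<close>

lemma log_ratio_le_pointwise_mi_add_cond_self_info:
  fixes Q :: "('s \<times> 'x \<times> 'y) pmf"
  defines "QYS \<equiv> map_pmf (\<lambda>(s, x, y). (y, s)) Q" and "QXS \<equiv> map_pmf (\<lambda>(s, x, y). (x, s)) Q"
  assumes "0 < pmf Q (s, x, y)"
  shows "log 2 (pmf Q (s, x, y) / (pmf QXS (x, s) * pmf (map_pmf (\<lambda>(s, x, y). y) Q) y))
    \<le> pointwise_mi QYS (y, s) + cond_self_info QXS (x, s)"
proof -
  let ?Y = "map_pmf (\<lambda>(s, x, y). y) Q" and ?S = "map_pmf fst Q"
  have marginals: "map_pmf fst QYS = ?Y" "map_pmf snd QYS = ?S" "map_pmf snd QXS = ?S"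
    by (simp_all add: QYS_def QXS_def map_pmf_comp case_prod_unfold)
  have "pmf Q (s, x, y) \<le> pmf QXS (x, s)" "pmf Q (s, x, y) \<le> pmf QYS (y, s)"
    unfolding QXS_def QYS_def
    using pmf_le_pmf_map[of Q "(s, x, y)" "\<lambda>(s, x, y). (x, s)"]
      pmf_le_pmf_map[of Q "(s, x, y)" "\<lambda>(s, x, y). (y, s)"] by simp_all
  moreover have "pmf QYS (y, s) \<le> pmf ?Y y" "pmf QYS (y, s) \<le> pmf ?S s"
    using pmf_le_pmf_map[of QYS "(y, s)" fst] pmf_le_pmf_map[of QYS "(y, s)" snd]
    by (simp_all add: marginals)
  ultimately have pos: "0 < pmf QXS (x, s)" "0 < pmf QYS (y, s)" "0 < pmf ?Y y" "0 < pmf ?S s"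
    using assms(3) by linarith+
  with assms(3) \<open>pmf Q (s, x, y) \<le> pmf QYS (y, s)\<close>
  have "log 2 (pmf Q (s, x, y) / (pmf QXS (x, s) * pmf ?Y y))
      \<le> log 2 (pmf QYS (y, s) / (pmf QXS (x, s) * pmf ?Y y))"
    by (simp add: divide_right_mono)
  also have "\<dots> = pointwise_mi QYS (y, s) + cond_self_info QXS (x, s)"
    using pos by (simp add: pointwise_mi_def cond_self_info_def marginals log_divide log_mult)
  finally show ?thesis .
qed

lemma mi_term_le_pointwise_mi_add_cond_self_info:
  fixes Q :: "('s::finite \<times> 'x \<times> 'y) pmf"
  defines "QYS \<equiv> map_pmf (\<lambda>(s, x, y). (y, s)) Q" and "QXS \<equiv> map_pmf (\<lambda>(s, x, y). (x, s)) Q"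
  shows "mi_term (map_pmf snd Q) (x, y)
    \<le> (\<Sum>s\<in>UNIV. pmf Q (s, x, y) * pointwise_mi QYS (y, s))
      + (\<Sum>s\<in>UNIV. pmf Q (s, x, y) * cond_self_info QXS (x, s))"
proof -
  let ?X = "map_pmf (\<lambda>(s, x, y). x) Q" and ?Y = "map_pmf (\<lambda>(s, x, y). y) Q"
  define a b where "a s = pmf Q (s, x, y)" and "b s = pmf QXS (x, s) * pmf ?Y y" for s
  have b_pos: "0 < b s" if "0 < a s" for s
  proof -
    have "a s \<le> pmf QXS (x, s)" "a s \<le> pmf ?Y y"
      unfolding a_def QXS_def
      using pmf_le_pmf_map[of Q "(s, x, y)" "\<lambda>(s, x, y). (x, s)"]
        pmf_le_pmf_map[of Q "(s, x, y)" "\<lambda>(s, x, y). y"] by simp_all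
    with that show ?thesis by (simp add: b_def)
  qed
  have "sum a UNIV = pmf (map_pmf snd Q) (x, y)"
    by (simp add: a_def pmf_map_snd_finite)
  moreover have "sum b UNIV = pmf ?X x * pmf ?Y y"
    using pmf_map_fst_finite[of QXS x]
    by (simp add: b_def sum_distrib_right QXS_def map_pmf_comp case_prod_unfold)
  moreover have "map_pmf fst (map_pmf snd Q) = ?X" "map_pmf snd (map_pmf snd Q) = ?Y"
    by (simp_all add: map_pmf_comp case_prod_unfold)
  ultimately have "mi_term (map_pmf snd Q) (x, y) = sum a UNIV * log 2 (sum a UNIV / sum b UNIV)"
    by (simp add: mi_term_def)
  also have "\<dots> \<le> (\<Sum>s\<in>UNIV. a s * log 2 (a s / b s))"
    by (rule log_sum_inequality) (use b_pos in \<open>simp_all add: a_def b_def\<close>)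
  also have "\<dots> \<le> (\<Sum>s\<in>UNIV. a s * (pointwise_mi QYS (y, s) + cond_self_info QXS (x, s)))"
  proof (rule sum_mono)
    fix s
    show "a s * log 2 (a s / b s) \<le> a s * (pointwise_mi QYS (y, s) + cond_self_info QXS (x, s))"
      using log_ratio_le_pointwise_mi_add_cond_self_info[of Q s x y]
      by (cases "a s = 0") (simp_all add: a_def b_def QYS_def QXS_def order_less_le mult_left_mono)
  qed
  also have "\<dots> = (\<Sum>s\<in>UNIV. pmf Q (s, x, y) * pointwise_mi QYS (y, s))
      + (\<Sum>s\<in>UNIV. pmf Q (s, x, y) * cond_self_info QXS (x, s))"
    by (simp add: a_def distrib_left sum.distrib)
  finally show ?thesis .
qed

text \<open>This is \<open>I(X;Y) \<le> I(S,X;Y) = I(S;Y) + I(X;Y|S) \<le> I(S;Y) + H(X|S)\<close>. The series defining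
  these quantities need not converge absolutely, so instead of the chain rule the pointwise bound
  above is summed with \<open>infsum_signed_le\<close>.\<close>

lemma mutual_info_pmf_le_add_cond_entropy:
  fixes Q :: "('s::finite \<times> 'x::countable \<times> 'y::countable) pmf"
  shows "mutual_info_pmf (map_pmf snd Q)
    \<le> mutual_info_pmf (map_pmf (\<lambda>(s, x, y). (y, s)) Q) + cond_entropy_pmf (map_pmf (\<lambda>(s, x, y). (x, s)) Q)"
proof -
  let ?YS = "map_pmf (\<lambda>(s, x, y). (y, s)) Q" and ?XS = "map_pmf (\<lambda>(s, x, y). (x, s)) Q"
  define b where "b s p = pmf Q (s, p) * pointwise_mi ?YS ((\<lambda>(s, x, y). (y, s)) (s, p))" for s p
  define c where "c p = (\<Sum>s\<in>UNIV. pmf Q (s, p) * cond_self_info ?XS ((\<lambda>(s, x, y). (x, s)) (s, p)))" for p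
  have le: "mi_term (map_pmf snd Q) p \<le> (\<Sum>s\<in>UNIV. b s p) + c p" for p
    using mi_term_le_pointwise_mi_add_cond_self_info[of Q "fst p" "snd p"]
    by (simp add: b_def c_def case_prod_unfold)
  have c_nonneg: "0 \<le> c p" for p
    by (simp add: c_def sum_nonneg cond_self_info_nonneg)
  have pos_YS: "(\<Sum>\<^sub>\<infinity>p. \<Sum>s\<in>UNIV. ennreal (b s p)) = (\<Sum>\<^sub>\<infinity>u. ennreal (mi_term ?YS u))"
    unfolding b_def infsum_sum_pmf_eq_infsum_map_pmf mi_term_eq_pmf_mult_pointwise_mi ..
  have neg_YS: "(\<Sum>\<^sub>\<infinity>p. \<Sum>s\<in>UNIV. ennreal (- b s p)) = (\<Sum>\<^sub>\<infinity>u. ennreal (- mi_term ?YS u))"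
    using infsum_sum_pmf_eq_infsum_map_pmf[of Q "\<lambda>u. - pointwise_mi ?YS u" "\<lambda>(s, x, y). (y, s)"]
    by (simp add: b_def mi_term_eq_pmf_mult_pointwise_mi)
  have "(\<Sum>\<^sub>\<infinity>p. ennreal (c p)) = (\<Sum>\<^sub>\<infinity>p. \<Sum>s\<in>UNIV.
      ennreal (pmf Q (s, p) * cond_self_info ?XS ((\<lambda>(s, x, y). (x, s)) (s, p))))"
    by (simp add: c_def cond_self_info_nonneg)
  also have "\<dots> = cond_entropy_pmf ?XS"
    unfolding infsum_sum_pmf_eq_infsum_map_pmf cond_entropy_pmf_eq_infsum ..
  finally have cond_XS: "(\<Sum>\<^sub>\<infinity>p. ennreal (c p)) = cond_entropy_pmf ?XS" .
  show ?thesis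
    using infsum_signed_le[OF le c_nonneg infsum_neg_mi_term_finite]
      infsum_neg_mi_term_finite[of ?YS]
    unfolding mutual_info_pmf_def pos_YS neg_YS cond_XS by simp
qed

lemma map_joint_SXTY_input:
  "map_pmf (\<lambda>((s, x, t), y). g s x t) (joint_SXTY P K) = map_pmf (\<lambda>(s, x, t). g s x t) P"
  by (simp add: joint_SXTY_def map_bind_pmf map_pmf_comp case_prod_unfold map_pmf_def[symmetric])

lemma joint_SXTY_mutual_info_XY_le:
  fixes P :: "('s::finite \<times> 'x::countable \<times> 't::countable) pmf"
  shows "mutual_info_pmf (map_pmf (\<lambda>((s, x, t), y). (x, y)) (joint_SXTY P K))
    \<le> mutual_info_pmf (map_pmf (\<lambda>((s, x, t), y). (y, s)) (joint_SXTY P K))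
      + cond_entropy_pmf (map_pmf (\<lambda>(s, x, t). (x, s)) P)"
  using mutual_info_pmf_le_add_cond_entropy[of "map_pmf (\<lambda>((s, x, t), y). (s, x, y)) (joint_SXTY P K)"]
    map_joint_SXTY_input[of "\<lambda>s x t. (x, s)" P K]
  by (simp add: map_pmf_comp case_prod_unfold)

lemma joint_SXTY_mutual_info_YT_le:
  fixes P :: "('s::finite \<times> 'x::countable \<times> 't::countable) pmf"
  shows "mutual_info_pmf (map_pmf (\<lambda>((s, x, t), y). (y, t)) (joint_SXTY P K))
    \<le> mutual_info_pmf (map_pmf (\<lambda>((s, x, t), y). (y, s)) (joint_SXTY P K))
      + cond_entropy_pmf (map_pmf (\<lambda>(s, x, t). (t, s)) P)"
  using mutual_info_pmf_le_add_cond_entropy[of "map_pmf (\<lambda>((s, x, t), y). (s, t, y)) (joint_SXTY P K)"]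
    map_joint_SXTY_input[of "\<lambda>s x t. (t, s)" P K]
    mutual_info_pmf_swap[of "map_pmf (\<lambda>((s, x, t), y). (t, y)) (joint_SXTY P K)"]
  by (simp add: map_pmf_comp case_prod_unfold)

lemma g_fun_le_cond_entropy_add:
  fixes P :: "('s::finite \<times> 'x::countable \<times> 't::countable) pmf"
  shows "g_fun r \<epsilon> P \<le> cond_entropy_pmf (map_pmf (\<lambda>(s, x, t). (t, s)) P) + ennreal \<epsilon>"
proof -
  have "mutual_info_pmf (map_pmf (\<lambda>((s, x, t), y). (y, t)) (joint_SXTY P K))
      \<le> cond_entropy_pmf (map_pmf (\<lambda>(s, x, t). (t, s)) P) + ennreal \<epsilon>"
    if "mutual_info_pmf (map_pmf (\<lambda>((s, x, t), y). (y, s)) (joint_SXTY P K)) \<le> ennreal \<epsilon>" for K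
  proof -
    have "mutual_info_pmf (map_pmf (\<lambda>((s, x, t), y). (y, t)) (joint_SXTY P K))
        \<le> mutual_info_pmf (map_pmf (\<lambda>((s, x, t), y). (y, s)) (joint_SXTY P K))
          + cond_entropy_pmf (map_pmf (\<lambda>(s, x, t). (t, s)) P)"
      by (rule joint_SXTY_mutual_info_YT_le)
    also have "\<dots> \<le> ennreal \<epsilon> + cond_entropy_pmf (map_pmf (\<lambda>(s, x, t). (t, s)) P)"
      using that by (rule add_right_mono)
    finally show ?thesis by (simp add: add.commute)
  qed
  then show ?thesis
    unfolding g_fun_def by (auto intro!: SUP_least)
qed

section \<open>The leaky channel\<close>

locale leaky_channel =
  fixes T_dist :: "'t::countable pmf" and f :: "'t \<Rightarrow> 's::finite" and lam :: real
  assumes lam_nonneg: "0 \<le> lam" and lam_le_1: "lam \<le> 1"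
begin

definition S_dist :: "'s pmf" where
  "S_dist = map_pmf f T_dist"

text \<open>For \<open>s\<close> of probability zero, \<open>T_given s\<close> is an irrelevant placeholder.\<close>

definition T_given :: "'s \<Rightarrow> 't pmf" where
  "T_given s = (if set_pmf T_dist \<inter> f -` {s} = {} then T_dist else cond_pmf T_dist (f -` {s}))"

definition section_pmf :: "'s \<Rightarrow> 't \<Rightarrow> ('s \<Rightarrow> 't) pmf" where
  "section_pmf s t = Pi_pmf UNIV t (\<lambda>s'. if s' = s then return_pmf t else T_given s')"

definition leak_pmf :: "'s \<Rightarrow> 's option pmf" where
  "leak_pmf s = map_pmf (\<lambda>b. if b then Some s else None) (bernoulli_pmf lam)"

definition channel :: "'s \<Rightarrow> 't \<Rightarrow> (('s \<Rightarrow> 't) \<times> 's option) pmf" where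
  "channel s t = pair_pmf (section_pmf s t) (leak_pmf s)"

definition joint_YT :: "((('s \<Rightarrow> 't) \<times> 's option) \<times> 't) pmf" where
  "joint_YT = bind_pmf T_dist (\<lambda>t. map_pmf (\<lambda>y. (y, t)) (channel (f t) t))"

definition joint_YS :: "((('s \<Rightarrow> 't) \<times> 's option) \<times> 's) pmf" where
  "joint_YS = map_pmf (\<lambda>(y, t). (y, f t)) joint_YT"

definition section_weight :: "('s \<Rightarrow> 't) \<Rightarrow> real" where
  "section_weight w = (\<Prod>s\<in>UNIV. pmf (T_given s) (w s))"

definition leak_prob :: "'s \<Rightarrow> 's option \<Rightarrow> real" where
  "leak_prob s z = (if z = Some s then lam else if z = None then 1 - lam else 0)"

lemma pmf_T_le_pmf_S: "pmf T_dist t \<le> pmf S_dist (f t)"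
  unfolding S_dist_def by (rule pmf_le_pmf_map)

lemma pmf_T_given:
  assumes "0 < pmf S_dist s"
  shows "pmf (T_given s) t = (if f t = s then pmf T_dist t / pmf S_dist s else 0)"
proof -
  have "measure T_dist (f -` {s}) = pmf S_dist s"
    by (simp add: S_dist_def pmf_map)
  with assms have "set_pmf T_dist \<inter> f -` {s} \<noteq> {}"
    by (auto simp flip: measure_pmf_zero_iff)
  with \<open>measure T_dist (f -` {s}) = pmf S_dist s\<close> show ?thesis
    by (simp add: T_given_def pmf_cond)
qed

lemma pmf_section_pmf:
  "pmf (section_pmf s t) w = (if w s = t then (\<Prod>s'\<in>UNIV - {s}. pmf (T_given s') (w s')) else 0)"
proof -
  have "pmf (section_pmf s t) w = (\<Prod>s'\<in>UNIV. pmf (if s' = s then return_pmf t else T_given s') (w s'))"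
    unfolding section_pmf_def by (rule pmf_Pi') auto
  also have "\<dots> = pmf (return_pmf t) (w s) * (\<Prod>s'\<in>UNIV - {s}. pmf (T_given s') (w s'))"
    by (subst prod.remove[of UNIV s]) (auto intro!: prod.cong)
  finally show ?thesis by (simp add: indicator_def)
qed

lemma pmf_T_mult_pmf_section_pmf:
  "pmf T_dist t * pmf (section_pmf (f t) t) w
    = (if w (f t) = t then pmf S_dist (f t) * section_weight w else 0)"
proof (cases "w (f t) = t")
  case True
  have weight: "section_weight w = pmf (T_given (f t)) t * (\<Prod>s'\<in>UNIV - {f t}. pmf (T_given s') (w s'))"
    unfolding section_weight_def using True by (subst prod.remove[of UNIV "f t"]) auto
  show ?thesis
  proof (cases "0 < pmf S_dist (f t)")
    case True
    then show ?thesis using \<open>w (f t) = t\<close> by (simp add: pmf_section_pmf weight pmf_T_given)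
  next
    case False
    then have "pmf S_dist (f t) = 0" "pmf T_dist t = 0"
      using pmf_T_le_pmf_S[of t] pmf_nonneg[of T_dist t] pmf_nonneg[of S_dist "f t"] by linarith+
    then show ?thesis by simp
  qed
qed (simp add: pmf_section_pmf)

lemma pmf_leak_pmf: "pmf (leak_pmf s) z = leak_prob s z"
proof -
  have "(\<lambda>b. if b then Some s else None) -` {z} = (if z = Some s then {True} else if z = None then {False} else {})"
    by (auto split: if_splits)
  then show ?thesis
    using lam_nonneg lam_le_1 by (simp add: leak_pmf_def leak_prob_def pmf_map measure_pmf_single)
qed

lemma pmf_joint_YT:
  "pmf joint_YT ((w, z), t)
    = (if w (f t) = t then pmf S_dist (f t) * section_weight w * leak_prob (f t) z else 0)"
proof -
  have "set_pmf (map_pmf (\<lambda>y. (y, t')) (channel (f t') t')) \<subseteq> {u. snd u = t'}" for t'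
    by auto
  from pmf_bind_pmf_tagged[OF this, of T_dist "((w, z), t)"]
  have "pmf joint_YT ((w, z), t) = pmf T_dist t * pmf (map_pmf (\<lambda>y. (y, t)) (channel (f t) t)) ((w, z), t)"
    by (simp add: joint_YT_def)
  also have "\<dots> = pmf T_dist t * pmf (section_pmf (f t) t) w * leak_prob (f t) z"
    using pmf_map_inj'[of "\<lambda>y. (y, t)" "channel (f t) t" "(w, z)"]
    by (simp add: inj_def channel_def pmf_pair pmf_leak_pmf)
  finally show ?thesis
    by (simp add: pmf_T_mult_pmf_section_pmf)
qed

lemma pmf_joint_YS: "pmf joint_YS ((w, z), s) = pmf S_dist s * section_weight w * leak_prob s z"
proof -
  let ?g = "\<lambda>(y :: ('s \<Rightarrow> 't) \<times> 's option, t). (y, f t)"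
  have "pmf joint_YS ((w, z), s) = measure joint_YT (?g -` {((w, z), s)})"
    unfolding joint_YS_def pmf_map ..
  also have "\<dots> = sum (pmf joint_YT) (if f (w s) = s then {((w, z), w s)} else {})"
    by (rule measure_pmf_eq_sum_pmf) (auto simp: pmf_joint_YT)
  also have "\<dots> = pmf S_dist s * section_weight w * leak_prob s z"
  proof (cases "f (w s) = s")
    case False
    have "pmf S_dist s * section_weight w = 0"
    proof (cases "0 < pmf S_dist s")
      case True
      with False have "pmf (T_given s) (w s) = 0" by (simp add: pmf_T_given)
      then show ?thesis by (simp add: section_weight_def) blast
    qed (use pmf_nonneg[of S_dist s] in auto)
    with False show ?thesis by simp
  qed (simp add: pmf_joint_YT)
  finally show ?thesis .
qed

lemma map_snd_joint_YT: "map_pmf snd joint_YT = T_dist"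
  by (simp add: joint_YT_def map_bind_pmf map_pmf_comp map_pmf_const bind_return_pmf')

lemma map_snd_joint_YS: "map_pmf snd joint_YS = S_dist"
proof -
  have "map_pmf snd joint_YS = map_pmf f (map_pmf snd joint_YT)"
    by (simp add: joint_YS_def map_pmf_comp case_prod_unfold)
  then show ?thesis by (simp add: map_snd_joint_YT S_dist_def)
qed

lemma map_fst_joint_YS: "map_pmf fst joint_YS = map_pmf fst joint_YT"
  by (simp add: joint_YS_def map_pmf_comp case_prod_unfold)

lemma pmf_map_fst_joint_YT:
  "pmf (map_pmf fst joint_YT) (w, z)
    = section_weight w * (case z of None \<Rightarrow> 1 - lam | Some s \<Rightarrow> lam * pmf S_dist s)"
proof -
  have "pmf (map_pmf fst joint_YT) (w, z) = (\<Sum>s\<in>UNIV. pmf joint_YS ((w, z), s))"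
    by (simp add: pmf_map_fst_finite flip: map_fst_joint_YS)
  also have "\<dots> = section_weight w * (\<Sum>s\<in>UNIV. pmf S_dist s * leak_prob s z)"
    by (simp add: pmf_joint_YS sum_distrib_left algebra_simps)
  also have "(\<Sum>s\<in>UNIV. pmf S_dist s * leak_prob s z)
      = (case z of None \<Rightarrow> 1 - lam | Some s \<Rightarrow> lam * pmf S_dist s)"
  proof (cases z)
    case None
    then show ?thesis by (simp add: leak_prob_def sum_distrib_right[symmetric] sum_pmf_eq_1)
  next
    case (Some s)
    then have "(\<Sum>s'\<in>UNIV. pmf S_dist s' * leak_prob s' z) = (\<Sum>s'\<in>{s}. pmf S_dist s' * leak_prob s' z)"
      by (intro sum.mono_neutral_right) (auto simp: leak_prob_def)
    then show ?thesis using Some by (simp add: leak_prob_def)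
  qed
  finally show ?thesis .
qed

lemma pointwise_mi_joint_YS:
  assumes "u \<in> set_pmf joint_YS"
  shows "pointwise_mi joint_YS u = (if snd (fst u) = None then 0 else - log 2 (pmf S_dist (snd u)))"
proof -
  obtain w z s where u: "u = ((w, z), s)" by (metis prod.collapse)
  have "0 \<le> section_weight w" by (simp add: section_weight_def prod_nonneg)
  moreover have "0 \<le> leak_prob s z" using lam_nonneg lam_le_1 by (simp add: leak_prob_def)
  moreover have "pmf S_dist s * section_weight w * leak_prob s z \<noteq> 0"
    using assms by (simp add: u pmf_joint_YS set_pmf_iff)
  ultimately have pos: "0 < pmf S_dist s" "0 < section_weight w" "0 < leak_prob s z"
    by (simp_all add: order_less_le)
  show ?thesis
  proof (cases z)
    case None
    with pos show ?thesis
      by (simp add: u pointwise_mi_def pmf_joint_YS pmf_map_fst_joint_YT map_fst_joint_YS map_snd_joint_YS leak_prob_def)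
  next
    case (Some s')
    with pos have "s' = s" "0 < lam" by (auto simp: leak_prob_def split: if_splits)
    with pos Some have "pointwise_mi joint_YS u = log 2 (1 / pmf S_dist s)"
      by (simp add: u pointwise_mi_def pmf_joint_YS pmf_map_fst_joint_YT map_fst_joint_YS map_snd_joint_YS leak_prob_def)
    with pos Some show ?thesis by (simp add: u log_divide)
  qed
qed

lemma pointwise_mi_joint_YS_nonneg: "u \<in> set_pmf joint_YS \<Longrightarrow> 0 \<le> pointwise_mi joint_YS u"
  using neg_log2_nonneg[of "pmf S_dist (snd u)"] by (simp add: pointwise_mi_joint_YS pmf_le_1)

lemma log_pmf_S_div_pmf_T_nonneg: "0 \<le> log 2 (pmf S_dist (f t) / pmf T_dist t)"
proof (cases "pmf T_dist t = 0")
  case False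
  then have "1 \<le> pmf S_dist (f t) / pmf T_dist t"
    using pmf_T_le_pmf_S[of t] pmf_nonneg[of T_dist t] by simp
  then show ?thesis by simp
qed (simp add: log_def)

lemma pointwise_mi_joint_YT:
  assumes "u \<in> set_pmf joint_YT"
  shows "pointwise_mi joint_YT u
    = pointwise_mi joint_YS ((\<lambda>(y, t). (y, f t)) u) + log 2 (pmf S_dist (f (snd u)) / pmf T_dist (snd u))"
proof -
  obtain w z t where u: "u = ((w, z), t)" by (metis prod.collapse)
  have "0 < pmf joint_YT u" using assms by (simp add: pmf_positive)
  then have "w (f t) = t" by (simp add: u pmf_joint_YT split: if_splits)
  then have same: "pmf joint_YS ((w, z), f t) = pmf joint_YT u"
    by (simp add: u pmf_joint_YS pmf_joint_YT)
  have "pmf joint_YT u \<le> pmf (map_pmf fst joint_YT) (w, z)" "pmf joint_YT u \<le> pmf T_dist t"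
    using pmf_le_pmf_map[of joint_YT u fst] pmf_le_pmf_map[of joint_YT u snd]
    by (simp_all add: u map_snd_joint_YT)
  with \<open>0 < pmf joint_YT u\<close> pmf_T_le_pmf_S[of t] show ?thesis
    by (simp add: u pointwise_mi_def map_fst_joint_YS map_snd_joint_YS map_snd_joint_YT same
        log_divide log_mult)
qed

lemma nn_integral_leaked_information:
  "(\<integral>\<^sup>+u. ennreal (if snd (fst u) = None then 0 else - log 2 (pmf S_dist (f (snd u)))) \<partial>joint_YT)
    = ennreal lam * entropy_pmf S_dist"
proof -
  have leak: "(\<integral>\<^sup>+y. ennreal (if snd y = None then 0 else c) \<partial>channel s t) = ennreal lam * ennreal c"
    if "0 \<le> c" for c s t
    using lam_nonneg lam_le_1 that
    by (simp add: channel_def leak_pmf_def nn_integral_pair_pmf' measure_pmf.emeasure_space_1 mult.commute)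
  have "(\<integral>\<^sup>+u. ennreal (if snd (fst u) = None then 0 else - log 2 (pmf S_dist (f (snd u)))) \<partial>joint_YT)
      = (\<integral>\<^sup>+t. \<integral>\<^sup>+y. ennreal (if snd y = None then 0 else - log 2 (pmf S_dist (f t)))
          \<partial>channel (f t) t \<partial>T_dist)"
    unfolding joint_YT_def nn_integral_bind_pmf nn_integral_map_pmf by (simp only: fst_conv snd_conv)
  also have "\<dots> = (\<integral>\<^sup>+t. ennreal lam * ennreal (- log 2 (pmf S_dist (f t))) \<partial>T_dist)"
    by (intro nn_integral_cong leak neg_log2_nonneg) (simp_all add: pmf_le_1)
  also have "\<dots> = ennreal lam * (\<integral>\<^sup>+s. ennreal (- log 2 (pmf S_dist s)) \<partial>S_dist)"
    by (simp add: nn_integral_cmult S_dist_def)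
  finally show ?thesis by (simp add: entropy_pmf_eq_nn_integral)
qed

lemma mutual_info_joint_YS: "mutual_info_pmf joint_YS = ennreal lam * entropy_pmf S_dist"
proof -
  have "mutual_info_pmf joint_YS = (\<integral>\<^sup>+u. ennreal (pointwise_mi joint_YS u) \<partial>joint_YS)"
    by (rule mutual_info_pmf_eq_nn_integral) (rule pointwise_mi_joint_YS_nonneg)
  also have "\<dots>
      = (\<integral>\<^sup>+u. ennreal (if snd (fst u) = None then 0 else - log 2 (pmf S_dist (snd u))) \<partial>joint_YS)"
    by (intro nn_integral_cong_AE AE_pmfI) (simp add: pointwise_mi_joint_YS)
  also have "\<dots> = ennreal lam * entropy_pmf S_dist"
    unfolding joint_YS_def nn_integral_map_pmf case_prod_unfold
    by (simp only: fst_conv snd_conv nn_integral_leaked_information)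
  finally show ?thesis .
qed

lemma mutual_info_joint_YT:
  "mutual_info_pmf joint_YT = mutual_info_pmf joint_YS + cond_entropy_pmf (map_pmf (\<lambda>t. (t, f t)) T_dist)"
proof -
  let ?g = "\<lambda>(y :: ('s \<Rightarrow> 't) \<times> 's option, t). (y, f t)"
  let ?h = "\<lambda>t. ennreal (log 2 (pmf S_dist (f t) / pmf T_dist t))"
  have nonneg: "0 \<le> pointwise_mi joint_YS (?g u)" if "u \<in> set_pmf joint_YT" for u
    using that by (intro pointwise_mi_joint_YS_nonneg) (simp add: joint_YS_def)
  have "mutual_info_pmf joint_YT = (\<integral>\<^sup>+u. ennreal (pointwise_mi joint_YT u) \<partial>joint_YT)"
    by (rule mutual_info_pmf_eq_nn_integral)
      (simp add: pointwise_mi_joint_YT nonneg log_pmf_S_div_pmf_T_nonneg)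
  also have "\<dots> = (\<integral>\<^sup>+u. ennreal (pointwise_mi joint_YS (?g u)) + ?h (snd u) \<partial>joint_YT)"
    by (intro nn_integral_cong_AE AE_pmfI)
      (simp add: pointwise_mi_joint_YT nonneg log_pmf_S_div_pmf_T_nonneg)
  also have "\<dots> = (\<integral>\<^sup>+u. ennreal (pointwise_mi joint_YS (?g u)) \<partial>joint_YT)
      + (\<integral>\<^sup>+u. ?h (snd u) \<partial>joint_YT)"
    by (rule nn_integral_add) simp_all
  also have "(\<integral>\<^sup>+u. ennreal (pointwise_mi joint_YS (?g u)) \<partial>joint_YT) = mutual_info_pmf joint_YS"
    using mutual_info_pmf_eq_nn_integral[OF pointwise_mi_joint_YS_nonneg]
    by (simp only: joint_YS_def nn_integral_map_pmf)
  also have "(\<integral>\<^sup>+u. ?h (snd u) \<partial>joint_YT) = cond_entropy_pmf (map_pmf (\<lambda>t. (t, f t)) T_dist)"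
    using nn_integral_map_pmf[where f="?h" and g=snd and M=joint_YT]
    by (simp add: map_snd_joint_YT cond_entropy_pmf_graph S_dist_def)
  finally show ?thesis .
qed

definition coded_channel :: "'s \<times> 'x \<times> 't \<Rightarrow> nat pmf" where
  "coded_channel = (\<lambda>(s, x, t). map_pmf to_nat (channel s t))"

context
  fixes P :: "('s \<times> 'x \<times> 't) pmf"
  assumes T_dist_eq: "T_dist = map_pmf (\<lambda>(s, x, t). t) P"
    and S_eq_f_T: "\<forall>(s, x, t) \<in> set_pmf P. s = f t"
begin

lemma joint_SXTY_coded_channel_YT:
  "map_pmf (\<lambda>((s, x, t), y). (y, t)) (joint_SXTY P coded_channel) = map_pmf (map_prod to_nat id) joint_YT"
proof -
  have "map_pmf (\<lambda>((s, x, t), y). (y, t)) (joint_SXTY P coded_channel)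
      = bind_pmf P (\<lambda>(s, x, t). map_pmf (\<lambda>y. (to_nat y, t)) (channel (f t) t))"
    unfolding joint_SXTY_def map_bind_pmf
    by (rule bind_pmf_cong) (use S_eq_f_T in \<open>auto simp: coded_channel_def map_pmf_comp\<close>)
  also have "\<dots> = bind_pmf T_dist (\<lambda>t. map_pmf (\<lambda>y. (to_nat y, t)) (channel (f t) t))"
    using T_dist_eq by (simp add: bind_map_pmf case_prod_unfold)
  also have "\<dots> = map_pmf (map_prod to_nat id) joint_YT"
    by (simp add: joint_YT_def map_bind_pmf map_pmf_comp)
  finally show ?thesis .
qed

lemma joint_SXTY_coded_channel_YS:
  "map_pmf (\<lambda>((s, x, t), y). (y, s)) (joint_SXTY P coded_channel) = map_pmf (map_prod to_nat id) joint_YS"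
proof -
  have "map_pmf (\<lambda>((s, x, t), y). (y, s)) (joint_SXTY P coded_channel)
      = map_pmf (\<lambda>(y, t). (y, f t)) (map_pmf (\<lambda>((s, x, t), y). (y, t)) (joint_SXTY P coded_channel))"
    unfolding map_pmf_comp
    by (rule map_pmf_cong) (use S_eq_f_T in \<open>auto simp: joint_SXTY_def\<close>)
  also have "\<dots> = map_pmf (\<lambda>(y, t). (y, f t)) (map_pmf (map_prod to_nat id) joint_YT)"
    by (simp only: joint_SXTY_coded_channel_YT)
  also have "\<dots> = map_pmf (map_prod to_nat id) joint_YS"
    by (simp add: joint_YS_def map_pmf_comp case_prod_unfold)
  finally show ?thesis .
qed

lemma mutual_info_coded_channel_YS:
  "mutual_info_pmf (map_pmf (\<lambda>((s, x, t), y). (y, s)) (joint_SXTY P coded_channel))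
    = ennreal lam * entropy_pmf S_dist"
  by (simp add: joint_SXTY_coded_channel_YS mutual_info_pmf_map_fst_inj mutual_info_joint_YS)

lemma mutual_info_coded_channel_YT:
  "mutual_info_pmf (map_pmf (\<lambda>((s, x, t), y). (y, t)) (joint_SXTY P coded_channel))
    = cond_entropy_pmf (map_pmf (\<lambda>(s, x, t). (t, s)) P) + ennreal lam * entropy_pmf S_dist"
proof -
  have "map_pmf (\<lambda>(s, x, t). (t, s)) P = map_pmf (\<lambda>t. (t, f t)) T_dist"
    unfolding T_dist_eq map_pmf_comp by (rule map_pmf_cong) (use S_eq_f_T in auto)
  then show ?thesis
    by (simp add: joint_SXTY_coded_channel_YT mutual_info_pmf_map_fst_inj mutual_info_joint_YT
        mutual_info_joint_YS add.commute)
qed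

end

end

lemma cond_entropy_add_le_g_fun:
  fixes P :: "('s::finite \<times> 'x::countable \<times> 't::countable) pmf"
  assumes S_eq_f_T: "\<forall>(s, x, t) \<in> set_pmf P. s = f t"
    and "0 \<le> lam" "lam \<le> 1"
    and leak: "ennreal lam * entropy_pmf (map_pmf (\<lambda>(s, x, t). s) P) = ennreal \<epsilon>"
    and budget: "cond_entropy_pmf (map_pmf (\<lambda>(s, x, t). (x, s)) P) + ennreal \<epsilon> \<le> ennreal r"
  shows "cond_entropy_pmf (map_pmf (\<lambda>(s, x, t). (t, s)) P) + ennreal \<epsilon> \<le> g_fun r \<epsilon> P"
proof -
  interpret leaky_channel "map_pmf (\<lambda>(s, x, t). t) P" f lam
    using \<open>0 \<le> lam\<close> \<open>lam \<le> 1\<close> by unfold_locales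
  let ?J = "joint_SXTY P coded_channel"
  have "S_dist = map_pmf (\<lambda>(s, x, t). s) P"
    unfolding S_dist_def map_pmf_comp by (rule map_pmf_cong) (use S_eq_f_T in auto)
  then have "ennreal lam * entropy_pmf S_dist = ennreal \<epsilon>"
    using leak by simp
  then have YS: "mutual_info_pmf (map_pmf (\<lambda>((s, x, t), y). (y, s)) ?J) = ennreal \<epsilon>"
    and YT: "mutual_info_pmf (map_pmf (\<lambda>((s, x, t), y). (y, t)) ?J)
      = cond_entropy_pmf (map_pmf (\<lambda>(s, x, t). (t, s)) P) + ennreal \<epsilon>"
    using mutual_info_coded_channel_YS[OF refl S_eq_f_T] mutual_info_coded_channel_YT[OF refl S_eq_f_T]
    by simp_all
  have "mutual_info_pmf (map_pmf (\<lambda>((s, x, t), y). (x, y)) ?J)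
      \<le> ennreal \<epsilon> + cond_entropy_pmf (map_pmf (\<lambda>(s, x, t). (x, s)) P)"
    using joint_SXTY_mutual_info_XY_le[of P coded_channel] by (simp only: YS)
  also have "\<dots> \<le> ennreal r"
    using budget by (simp only: add.commute)
  finally have XY: "mutual_info_pmf (map_pmf (\<lambda>((s, x, t), y). (x, y)) ?J) \<le> ennreal r" .
  show ?thesis
    unfolding g_fun_def by (rule SUP_upper2[where i=coded_channel]) (use YS XY YT in auto)
qed

theorem mainTheorem5:
  fixes P :: "('s::finite \<times> 'x::countable \<times> 't::countable) pmf"
    and f :: "'t \<Rightarrow> 's" and \<epsilon> r :: real
  assumes finS: "entropy_pmf (map_pmf (\<lambda>(s,x,t). s) P) \<noteq> \<top>"
    and finX: "entropy_pmf (map_pmf (\<lambda>(s,x,t). x) P) \<noteq> \<top>"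
    and finT: "entropy_pmf (map_pmf (\<lambda>(s,x,t). t) P) \<noteq> \<top>"
    and det: "\<forall>(s,x,t) \<in> set_pmf P. s = f t"
    and eps: "\<epsilon> \<ge> 0" and rnn: "r \<ge> 0"
    and lower: "cond_entropy_pmf (map_pmf (\<lambda>(s,x,t). (x,s)) P) + ennreal \<epsilon> \<le> ennreal r"
    and upper: "ennreal r < entropy_pmf (map_pmf (\<lambda>(s,x,t). x) P)"
  shows "g_fun r \<epsilon> P = cond_entropy_pmf (map_pmf (\<lambda>(s,x,t). (t,s)) P) + ennreal \<epsilon>"
proof -
  let ?H_S = "entropy_pmf (map_pmf (\<lambda>(s, x, t). s) P)"
  have "cond_entropy_pmf (map_pmf (\<lambda>(s, x, t). (x, s)) P) + ennreal \<epsilon>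
      < entropy_pmf (map_pmf fst (map_pmf (\<lambda>(s, x, t). (x, s)) P))"
    using le_less_trans[OF lower upper] by (simp add: map_pmf_comp case_prod_unfold)
  then have "ennreal \<epsilon> < entropy_pmf (map_pmf snd (map_pmf (\<lambda>(s, x, t). (x, s)) P))"
    by (rule less_entropy_snd_if_cond_entropy_add_less)
  then have "ennreal \<epsilon> < ?H_S"
    by (simp add: map_pmf_comp case_prod_unfold)
  moreover obtain h where h: "?H_S = ennreal h" "0 \<le> h"
    using finS by (cases ?H_S) auto
  ultimately have "\<epsilon> < h"
    using eps by (simp add: ennreal_less_iff)
  define lam where "lam = \<epsilon> / h"
  have "0 \<le> lam" "lam \<le> 1" "ennreal lam * ?H_S = ennreal \<epsilon>"
    using eps \<open>\<epsilon> < h\<close> by (simp_all add: lam_def h ennreal_mult''[symmetric])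
  then have "cond_entropy_pmf (map_pmf (\<lambda>(s, x, t). (t, s)) P) + ennreal \<epsilon> \<le> g_fun r \<epsilon> P"
    by (intro cond_entropy_add_le_g_fun[OF det _ _ _ lower])
  then show ?thesis
    by (intro antisym g_fun_le_cond_entropy_add)
qed

end
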